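(* Let $n \ge 1$, $1 \le i \le n+1$ and $k \ge 0$ be integers. The number of rooted trees on the vertex set $[n+1]=\{1,\ldots,n+1\}$ whose root is $i$ and in which exactly $k$ children of the root are smaller than $i$ equals (as an identity of rational numbers) $$\binom{i-1}{k}\,\big[(k+1)(n+1)-i\big]\,n^{\,i-k-2}\,(n+1)^{\,n-i}.$$
   Context: A rooted tree on a vertex set $V$ is a tree with vertex set $V$ together with a distinguished vertex (the root); the children of the root are the vertices adjacent to it. Vertices are compared by their integer labels. Exponents may be negative, in which case the powers are interpreted as rational numbers. *)

theory Defs
  imports Complex_Main
begin

definition simple_graph :: "'a set \<Rightarrow> 'a set set \<Rightarrow> bool" where
  "simple_graph V E \<longleftrightarrow> E \<subseteq> {{u, v} | u v. u \<in> V \<and> v \<in> V \<and> u \<noteq> v}"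

definition graph_connected :: "'a set \<Rightarrow> 'a set set \<Rightarrow> bool" where
  "graph_connected V E \<longleftrightarrow>
     (\<forall>u\<in>V. \<forall>v\<in>V. (u, v) \<in> {(x, y). {x, y} \<in> E}\<^sup>*)"

definition has_cycle :: "'a set set \<Rightarrow> bool" where
  "has_cycle E \<longleftrightarrow> (\<exists>cs. length cs \<ge> 3 \<and> distinct cs \<and>
      (\<forall>j < length cs. {cs ! j, cs ! ((j + 1) mod length cs)} \<in> E))"

definition is_tree :: "'a set \<Rightarrow> 'a set set \<Rightarrow> bool" where
  "is_tree V E \<longleftrightarrow> simple_graph V E \<and> graph_connected V E \<and> \<not> has_cycle E"

definition root_children :: "'a set set \<Rightarrow> 'a \<Rightarrow> 'a set" where
  "root_children E r = {v. {r, v} \<in> E}"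

end

theory Submission
  imports Defs "HOL-Library.Transitive_Closure_Table"
begin

(* Deleting the root i of a tree leaves a forest on the other n vertices whose roots are exactly
   the children of i, and conversely any such forest together with its root set J determines the
   tree. More generally, deleting a root r of a forest with root set R leaves a forest with root
   set R - {r} together with the children of r; summing over the possible sets of children gives
   a recurrence which, by the binomial identities for sum C(m,j) x^(m-j) and
   sum j C(m,j) x^(m-j), is solved by Cayley's count s N^(N-s-1) of forests on N vertices with
   a prescribed set of s roots. For the theorem, the children of i split into the k vertices
   below i, chosen in C(i-1,k) ways, and an arbitrary set of vertices above i. *)

section \<open>Walks and cycles\<close>

definition adj :: "'a set set \<Rightarrow> 'a \<Rightarrow> 'a \<Rightarrow> bool" where
  "adj E x y \<longleftrightarrow> {x, y} \<in> E"

definition conn :: "'a set set \<Rightarrow> 'a \<Rightarrow> 'a \<Rightarrow> bool" where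
  "conn E = (adj E)\<^sup>*\<^sup>*"

lemma adj_sym: "adj E x y \<Longrightarrow> adj E y x"
  by (simp add: adj_def insert_commute)

lemma adj_mono: "E \<subseteq> F \<Longrightarrow> adj E x y \<Longrightarrow> adj F x y"
  by (auto simp: adj_def)

lemma conn_refl [simp]: "conn E x x"
  by (simp add: conn_def)

lemma conn_adj: "adj E x y \<Longrightarrow> conn E x y"
  by (simp add: conn_def)

lemma conn_sym: "conn E x y \<Longrightarrow> conn E y x"
  unfolding conn_def
  by (induction rule: rtranclp_induct) (auto intro: converse_rtranclp_into_rtranclp adj_sym)

lemma conn_trans: "conn E x y \<Longrightarrow> conn E y z \<Longrightarrow> conn E x z"
  by (simp add: conn_def)

lemma conn_mono: "E \<subseteq> F \<Longrightarrow> conn E x y \<Longrightarrow> conn F x y"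
  unfolding conn_def by (erule rtranclp_mono[THEN predicate2D, rotated]) (auto simp: adj_def)

lemma conn_isolated: "\<forall>e\<in>E. r \<notin> e \<Longrightarrow> conn E x r \<Longrightarrow> x = r"
  unfolding conn_def by (erule rtranclp.cases) (auto simp: adj_def)

lemma graph_connected_conn: "graph_connected V E \<longleftrightarrow> (\<forall>u\<in>V. \<forall>v\<in>V. conn E u v)"
  unfolding graph_connected_def conn_def adj_def[abs_def]
  by (simp add: rtranclp_rtrancl_eq[symmetric])

lemma rtrancl_path_iff_successively:
  "rtrancl_path R x xs y \<longleftrightarrow> successively R (x # xs) \<and> last (x # xs) = y"
proof (induction xs arbitrary: x)
  case Nil
  then show ?case by (auto elim: rtrancl_path.cases intro: rtrancl_path.base)
next
  case (Cons z zs)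
  then show ?case by (auto elim: rtrancl_path.cases intro: rtrancl_path.step)
qed

lemma conn_if_walk: "successively (adj E) (x # xs) \<Longrightarrow> conn E x (last (x # xs))"
  unfolding conn_def rtranclp_eq_rtrancl_path rtrancl_path_iff_successively by blast

lemma conn_obtain_distinct_walk:
  assumes "conn E x y"
  obtains xs where "distinct (x # xs)" "successively (adj E) (x # xs)" "last (x # xs) = y"
  using assms unfolding conn_def rtranclp_eq_rtrancl_path
  by (metis rtrancl_path_distinct rtrancl_path_iff_successively)

lemma walk_avoids_isolated:
  "\<forall>e\<in>E. r \<notin> e \<Longrightarrow> successively (adj E) (x # xs) \<Longrightarrow> r \<notin> set xs"
  by (induction xs arbitrary: x) (auto simp: adj_def)

definition is_cycle :: "'a set set \<Rightarrow> 'a list \<Rightarrow> bool" where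
  "is_cycle E cs \<longleftrightarrow>
     3 \<le> length cs \<and> distinct cs \<and> successively (adj E) cs \<and> adj E (last cs) (hd cs)"

lemma cyclic_successor_iff:
  assumes "0 < L"
  shows "(\<forall>j < L. Q j ((j + 1) mod L)) \<longleftrightarrow> (\<forall>j. Suc j < L \<longrightarrow> Q j (Suc j)) \<and> Q (L - 1) 0"
proof
  assume Q: "\<forall>j < L. Q j ((j + 1) mod L)"
  have "Q j (Suc j)" if "Suc j < L" for j
    using Q[rule_format, of j] that by simp
  moreover have "Q (L - 1) 0"
    using Q[rule_format, of "L - 1"] assms by simp
  ultimately show "(\<forall>j. Suc j < L \<longrightarrow> Q j (Suc j)) \<and> Q (L - 1) 0"
    by blast
next
  assume Q: "(\<forall>j. Suc j < L \<longrightarrow> Q j (Suc j)) \<and> Q (L - 1) 0"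
  show "\<forall>j < L. Q j ((j + 1) mod L)"
  proof (intro allI impI)
    fix j assume "j < L"
    then consider "Suc j < L" | "j = L - 1" by linarith
    then show "Q j ((j + 1) mod L)"
      by cases (use Q assms in auto)
  qed
qed

lemma has_cycle_iff_is_cycle: "has_cycle E \<longleftrightarrow> (\<exists>cs. is_cycle E cs)"
proof -
  have "(\<forall>j < length cs. {cs ! j, cs ! ((j + 1) mod length cs)} \<in> E) \<longleftrightarrow>
          successively (adj E) cs \<and> adj E (last cs) (hd cs)" if "3 \<le> length cs" for cs :: "'a list"
  proof -
    from that have "cs \<noteq> []" by auto
    then show ?thesis
      using cyclic_successor_iff[of "length cs" "\<lambda>i j. adj E (cs ! i) (cs ! j)"]
      by (simp add: adj_def successively_conv_nth last_conv_nth hd_conv_nth)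
  qed
  then show ?thesis unfolding has_cycle_def is_cycle_def by blast
qed

lemma is_cycle_rotate:
  assumes "is_cycle E (xs @ ys)"
  shows "is_cycle E (ys @ xs)"
proof (cases "xs = [] \<or> ys = []")
  case True
  with assms show ?thesis by auto
next
  case False
  with assms show ?thesis
    by (simp add: is_cycle_def successively_append_iff add.commute Int_commute)
qed

lemma has_cycle_mono: "E \<subseteq> F \<Longrightarrow> has_cycle E \<Longrightarrow> has_cycle F"
  unfolding has_cycle_def by blast

section \<open>Attaching a vertex\<close>

definition attach :: "'a \<Rightarrow> 'a set \<Rightarrow> 'a set set \<Rightarrow> 'a set set" where
  "attach r J E = E \<union> (\<lambda>j. {r, j}) ` J"

lemma subset_attach: "E \<subseteq> attach r J E"
  by (simp add: attach_def)

lemma adj_attach_root: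
  "\<forall>e\<in>E. r \<notin> e \<Longrightarrow> r \<notin> J \<Longrightarrow> adj (attach r J E) r x \<longleftrightarrow> x \<in> J"
  by (auto simp: adj_def attach_def doubleton_eq_iff)

lemma adj_attach_other:
  "\<forall>e\<in>E. r \<notin> e \<Longrightarrow> x \<noteq> r \<Longrightarrow> y \<noteq> r \<Longrightarrow> adj (attach r J E) x y \<longleftrightarrow> adj E x y"
  by (auto simp: adj_def attach_def doubleton_eq_iff)

lemma conn_attach_cases:
  assumes E: "\<forall>e\<in>E. r \<notin> e" and "r \<notin> J" and xz: "conn (attach r J E) x z" and "x \<noteq> r"
  shows "conn E x z \<or> (\<exists>j\<in>J. conn E x j)"
  using xz[unfolded conn_def]
proof (induction rule: rtranclp_induct)
  case (step y z)
  show ?case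
  proof (cases "conn E x y")
    case True
    then have "y \<noteq> r" using conn_isolated[OF E, of x] \<open>x \<noteq> r\<close> by blast
    show ?thesis
    proof (cases "z = r")
      case True
      then have "y \<in> J"
        using adj_sym[OF step.hyps(2)] adj_attach_root[OF E \<open>r \<notin> J\<close>] by simp
      with \<open>conn E x y\<close> show ?thesis by blast
    next
      case False
      then have "adj E y z"
        using step.hyps(2) adj_attach_other[OF E \<open>y \<noteq> r\<close>] by simp
      with \<open>conn E x y\<close> show ?thesis by (blast intro: conn_trans conn_adj)
    qed
  qed (use step.IH in blast)
qed simp

lemma has_cycle_attach_if_conn:
  assumes E: "\<forall>e\<in>E. r \<notin> e" and "r \<notin> J"
    and "a \<in> J" "b \<in> J" "a \<noteq> b" "conn E a b"
  shows "has_cycle (attach r J E)"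
proof -
  obtain p where p: "distinct (a # p)" "successively (adj E) (a # p)" "last (a # p) = b"
    using conn_obtain_distinct_walk[OF \<open>conn E a b\<close>] by blast
  have "r \<notin> set (a # p)"
    using walk_avoids_isolated[OF E p(2)] \<open>a \<in> J\<close> \<open>r \<notin> J\<close> by auto
  moreover have "p \<noteq> []" using p(3) \<open>a \<noteq> b\<close> by auto
  moreover have "successively (adj (attach r J E)) (a # p)"
    using p(2) by (rule successively_mono) (rule adj_mono[OF subset_attach])
  moreover have "adj (attach r J E) r a" "adj (attach r J E) b r"
    using \<open>a \<in> J\<close> \<open>b \<in> J\<close> by (auto simp: adj_def attach_def)
  ultimately have "is_cycle (attach r J E) (r # a # p)"
    using p by (auto simp: is_cycle_def Suc_le_eq)
  then show ?thesis by (auto simp: has_cycle_iff_is_cycle)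
qed

lemma has_cycle_attach_cases:
  assumes E: "\<forall>e\<in>E. r \<notin> e" and "r \<notin> J" and "has_cycle (attach r J E)"
  shows "has_cycle E \<or> (\<exists>a\<in>J. \<exists>b\<in>J. a \<noteq> b \<and> conn E a b)"
proof -
  let ?G = "attach r J E"
  obtain cs where cs: "is_cycle ?G cs"
    using \<open>has_cycle ?G\<close> by (auto simp: has_cycle_iff_is_cycle)
  have other: "successively (adj E) xs" if "successively (adj ?G) xs" "r \<notin> set xs" for xs
    using that by (induction xs rule: induct_list012) (auto simp: adj_attach_other[OF E])
  show ?thesis
  proof (cases "r \<in> set cs")
    case False
    moreover have "cs \<noteq> []"
      using cs by (auto simp: is_cycle_def)
    ultimately have "hd cs \<noteq> r" "last cs \<noteq> r"
      using hd_in_set last_in_set by blast+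
    with cs False have "is_cycle E cs"
      using other adj_attach_other[OF E] by (simp add: is_cycle_def)
    then show ?thesis by (auto simp: has_cycle_iff_is_cycle)
  next
    case True
    then obtain xs ys where "cs = xs @ r # ys" by (meson split_list)
    \<comment> \<open>rotated to start at r, the rest of the cycle is a path in E joining two children of r\<close>
    with cs have "is_cycle ?G (r # ys @ xs)" using is_cycle_rotate[of ?G xs "r # ys"] by simp
    then obtain p where c: "is_cycle ?G (r # p)" by blast
    then have "2 \<le> length p" by (simp add: is_cycle_def)
    then obtain a q where "p = a # q" "q \<noteq> []"
      by (cases p; cases "tl p") auto
    with c have p: "distinct (r # p)" "adj ?G r a" "successively (adj ?G) p" "adj ?G (last p) r"
      by (simp_all add: is_cycle_def)
    have "a \<in> J" "last p \<in> J"
      using p(2) adj_sym[OF p(4)] adj_attach_root[OF E \<open>r \<notin> J\<close>] by simp_all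
    moreover have "conn E a (last p)"
      using conn_if_walk[of E a q] other[of p] p \<open>p = a # q\<close> by simp
    moreover have "a \<noteq> last p"
      using p(1) \<open>p = a # q\<close> \<open>q \<noteq> []\<close> last_in_set by fastforce
    ultimately show ?thesis by blast
  qed
qed

lemma attach_avoiding: "\<forall>e\<in>E. r \<notin> e \<Longrightarrow> {e \<in> attach r J E. r \<notin> e} = E"
  by (auto simp: attach_def)

lemma root_children_attach: "\<forall>e\<in>E. r \<notin> e \<Longrightarrow> r \<notin> J \<Longrightarrow> root_children (attach r J E) r = J"
  using adj_attach_root[of E r J] by (auto simp: root_children_def adj_def)

lemma inj_on_attach: "inj_on (\<lambda>(J, E). attach r J E) {(J, E). r \<notin> J \<and> (\<forall>e\<in>E. r \<notin> e)}"
proof (rule inj_onI, clarify)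
  fix J E J' E'
  assume "r \<notin> J" "\<forall>e\<in>E. r \<notin> e" "r \<notin> J'" "\<forall>e\<in>E'. r \<notin> e" "attach r J E = attach r J' E'"
  then show "J = J' \<and> E = E'"
    using root_children_attach attach_avoiding by metis
qed

lemma simple_graph_edge: "simple_graph V E \<Longrightarrow> {a, b} \<in> E \<Longrightarrow> a \<in> V \<and> b \<in> V \<and> a \<noteq> b"
  by (fastforce simp: simple_graph_def doubleton_eq_iff)

lemma simple_graph_avoids: "simple_graph (V - {r}) E \<Longrightarrow> \<forall>e\<in>E. r \<notin> e"
  by (auto simp: simple_graph_def)

lemma simple_graph_attach:
  "simple_graph (V - {r}) E \<Longrightarrow> r \<in> V \<Longrightarrow> J \<subseteq> V - {r} \<Longrightarrow> simple_graph V (attach r J E)"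
  unfolding simple_graph_def attach_def by blast

lemma simple_graph_Pow: "simple_graph V E \<Longrightarrow> E \<subseteq> Pow V"
  unfolding simple_graph_def by blast

section \<open>Rooted forests\<close>

definition rooted_forest :: "'a set \<Rightarrow> 'a set set \<Rightarrow> 'a set \<Rightarrow> bool" where
  "rooted_forest V E R \<longleftrightarrow> simple_graph V E \<and> \<not> has_cycle E \<and> R \<subseteq> V \<and>
     (\<forall>v\<in>V. \<exists>\<rho>\<in>R. conn E v \<rho>) \<and> (\<forall>\<rho>\<in>R. \<forall>\<rho>'\<in>R. conn E \<rho> \<rho>' \<longrightarrow> \<rho> = \<rho>')"

lemma finite_rooted_forests: "finite V \<Longrightarrow> finite {E. rooted_forest V E R}"
  by (rule finite_subset[of _ "Pow (Pow V)"]) (auto simp: rooted_forest_def dest: simple_graph_Pow)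

lemma tree_iff_rooted_forest:
  assumes "i \<in> V"
  shows "is_tree V E \<longleftrightarrow> rooted_forest V E {i}"
proof -
  have "graph_connected V E \<longleftrightarrow> (\<forall>v\<in>V. conn E v i)"
    unfolding graph_connected_conn
  proof safe
    fix u v assume "\<forall>v\<in>V. conn E v i" "u \<in> V" "v \<in> V"
    then show "conn E u v" by (metis conn_sym conn_trans)
  qed (use assms in blast)
  then show ?thesis
    using assms by (auto simp: is_tree_def rooted_forest_def)
qed

context
  fixes V R J :: "'a set" and E :: "'a set set" and r :: 'a
  assumes r: "r \<in> R" and R: "R \<subseteq> V" and J: "J \<subseteq> V - R" and E: "simple_graph (V - {r}) E"
begin

private lemma avoids: "\<forall>e\<in>E. r \<notin> e"
  using E by (rule simple_graph_avoids)

private lemma r_notin_J: "r \<notin> J"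
  using J r by blast

private lemma conn_attach: "conn E x y \<Longrightarrow> conn (attach r J E) x y"
  by (rule conn_mono[OF subset_attach])

private lemma conn_attach_root: "j \<in> J \<Longrightarrow> conn (attach r J E) j r"
  by (rule conn_adj) (auto simp: adj_def attach_def)

private lemma reach_if_attach_reach:
  assumes reach: "\<forall>v\<in>V. \<exists>\<rho>\<in>R. conn (attach r J E) v \<rho>"
  shows "\<forall>v\<in>V - {r}. \<exists>\<rho>\<in>R - {r} \<union> J. conn E v \<rho>"
proof
  fix v assume v: "v \<in> V - {r}"
  then obtain \<rho> where \<rho>: "\<rho> \<in> R" "conn (attach r J E) v \<rho>" using reach by blast
  have "v \<noteq> r" using v by blast
  from conn_attach_cases[OF avoids r_notin_J \<rho>(2) this]
  consider "conn E v \<rho>" | j where "j \<in> J" "conn E v j" by blast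
  then show "\<exists>\<rho>\<in>R - {r} \<union> J. conn E v \<rho>"
  proof cases
    case 1
    then have "\<rho> \<noteq> r" using conn_isolated[OF avoids] \<open>v \<noteq> r\<close> by blast
    with 1 \<rho>(1) show ?thesis by blast
  qed blast
qed

private lemma attach_reach_if_reach:
  assumes reach: "\<forall>v\<in>V - {r}. \<exists>\<rho>\<in>R - {r} \<union> J. conn E v \<rho>"
  shows "\<forall>v\<in>V. \<exists>\<rho>\<in>R. conn (attach r J E) v \<rho>"
proof
  fix v assume "v \<in> V"
  show "\<exists>\<rho>\<in>R. conn (attach r J E) v \<rho>"
  proof (cases "v = r")
    case False
    with \<open>v \<in> V\<close> reach obtain \<rho> where \<rho>: "\<rho> \<in> R - {r} \<union> J" "conn E v \<rho>" by blast
    show ?thesis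
    proof (cases "\<rho> \<in> J")
      case True
      then have "conn (attach r J E) v r"
        using conn_trans[OF conn_attach[OF \<rho>(2)] conn_attach_root] by blast
      with r show ?thesis by blast
    next
      case False
      with \<rho> have "\<rho> \<in> R" by blast
      with conn_attach[OF \<rho>(2)] show ?thesis by blast
    qed
  next
    case True
    with r show ?thesis by (intro bexI[of _ r]) simp_all
  qed
qed

private lemma separated_if_attach_separated:
  assumes acyclic: "\<not> has_cycle (attach r J E)"
    and sep: "\<forall>\<rho>\<in>R. \<forall>\<rho>'\<in>R. conn (attach r J E) \<rho> \<rho>' \<longrightarrow> \<rho> = \<rho>'"
  shows "\<forall>\<rho>\<in>R - {r} \<union> J. \<forall>\<rho>'\<in>R - {r} \<union> J. conn E \<rho> \<rho>' \<longrightarrow> \<rho> = \<rho>'"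
proof (intro ballI impI)
  fix \<rho> \<rho>' assume \<rho>: "\<rho> \<in> R - {r} \<union> J" "\<rho>' \<in> R - {r} \<union> J" "conn E \<rho> \<rho>'"
  have root_child: "\<not> conn E \<rho>\<^sub>0 j" if "\<rho>\<^sub>0 \<in> R - {r}" "j \<in> J" for \<rho>\<^sub>0 j
  proof
    assume "conn E \<rho>\<^sub>0 j"
    then have "conn (attach r J E) \<rho>\<^sub>0 r"
      using conn_trans[OF conn_attach conn_attach_root[OF \<open>j \<in> J\<close>]] by blast
    with sep r that(1) show False by blast
  qed
  consider "\<rho> \<in> J" "\<rho>' \<in> J" | "\<rho> \<in> R - {r}" "\<rho>' \<in> J" | "\<rho> \<in> J" "\<rho>' \<in> R - {r}"
    | "\<rho> \<in> R - {r}" "\<rho>' \<in> R - {r}"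
    using \<rho>(1,2) by blast
  then show "\<rho> = \<rho>'"
  proof cases
    case 1
    then show ?thesis
      using has_cycle_attach_if_conn[OF avoids r_notin_J _ _ _ \<rho>(3)] acyclic by blast
  next
    case 2
    then show ?thesis using root_child \<rho>(3) by blast
  next
    case 3
    then show ?thesis using root_child conn_sym[OF \<rho>(3)] by blast
  next
    case 4
    then show ?thesis using sep conn_attach[OF \<rho>(3)] by blast
  qed
qed

private lemma attach_separated_if_separated:
  assumes sep: "\<forall>\<rho>\<in>R - {r} \<union> J. \<forall>\<rho>'\<in>R - {r} \<union> J. conn E \<rho> \<rho>' \<longrightarrow> \<rho> = \<rho>'"
  shows "\<forall>\<rho>\<in>R. \<forall>\<rho>'\<in>R. conn (attach r J E) \<rho> \<rho>' \<longrightarrow> \<rho> = \<rho>'"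
proof -
  have one_side: "\<rho> = \<rho>'" if \<rho>: "\<rho> \<in> R - {r}" "\<rho>' \<in> R" "conn (attach r J E) \<rho> \<rho>'" for \<rho> \<rho>'
  proof -
    from \<rho> have "\<rho> \<noteq> r" by blast
    from conn_attach_cases[OF avoids r_notin_J \<rho>(3) this]
    consider "conn E \<rho> \<rho>'" | j where "j \<in> J" "conn E \<rho> j" by blast
    then show ?thesis
    proof cases
      case 1
      then have "\<rho>' \<noteq> r" using conn_isolated[OF avoids] \<open>\<rho> \<noteq> r\<close> by blast
      with 1 \<rho> sep show ?thesis by blast
    next
      case 2
      with \<rho> sep have "\<rho> \<in> J" by blast
      with \<rho>(1) J show ?thesis by blast
    qed
  qed
  show ?thesis
  proof (intro ballI impI)
    fix \<rho> \<rho>' assume \<rho>: "\<rho> \<in> R" "\<rho>' \<in> R" "conn (attach r J E) \<rho> \<rho>'"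
    show "\<rho> = \<rho>'"
    proof (cases "\<rho> = r")
      case True
      show ?thesis
      proof (cases "\<rho>' = r")
        case False
        with \<rho> show ?thesis using one_side conn_sym by (metis Diff_iff singletonD)
      qed (use True in simp)
    qed (use \<rho> one_side in blast)
  qed
qed

lemma rooted_forest_attach_iff:
  "rooted_forest V (attach r J E) R \<longleftrightarrow> rooted_forest (V - {r}) E (R - {r} \<union> J)"
proof
  assume "rooted_forest V (attach r J E) R"
  then have acyclic: "\<not> has_cycle (attach r J E)"
    and reach: "\<forall>v\<in>V. \<exists>\<rho>\<in>R. conn (attach r J E) v \<rho>"
    and sep: "\<forall>\<rho>\<in>R. \<forall>\<rho>'\<in>R. conn (attach r J E) \<rho> \<rho>' \<longrightarrow> \<rho> = \<rho>'"
    unfolding rooted_forest_def by blast+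
  have "\<not> has_cycle E"
    using acyclic has_cycle_mono[OF subset_attach[of E r J]] by blast
  moreover have "R - {r} \<union> J \<subseteq> V - {r}"
    using R J r by blast
  ultimately show "rooted_forest (V - {r}) E (R - {r} \<union> J)"
    unfolding rooted_forest_def
    using E reach_if_attach_reach[OF reach] separated_if_attach_separated[OF acyclic sep]
    by blast
next
  assume "rooted_forest (V - {r}) E (R - {r} \<union> J)"
  then have acyclic: "\<not> has_cycle E"
    and reach: "\<forall>v\<in>V - {r}. \<exists>\<rho>\<in>R - {r} \<union> J. conn E v \<rho>"
    and sep: "\<forall>\<rho>\<in>R - {r} \<union> J. \<forall>\<rho>'\<in>R - {r} \<union> J. conn E \<rho> \<rho>' \<longrightarrow> \<rho> = \<rho>'"
    unfolding rooted_forest_def by blast+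
  have "\<not> has_cycle (attach r J E)"
  proof
    assume "has_cycle (attach r J E)"
    with acyclic obtain a b where "a \<in> J" "b \<in> J" "a \<noteq> b" "conn E a b"
      using has_cycle_attach_cases[OF avoids r_notin_J] by blast
    with sep show False by blast
  qed
  moreover have "simple_graph V (attach r J E)"
    using simple_graph_attach[OF E] r R J by blast
  ultimately show "rooted_forest V (attach r J E) R"
    unfolding rooted_forest_def
    using R attach_reach_if_reach[OF reach] attach_separated_if_separated[OF sep]
    by blast
qed

end

lemma rooted_forest_decompose:
  assumes forest: "rooted_forest V G R" and r: "r \<in> R"
  shows "G = attach r (root_children G r) {e \<in> G. r \<notin> e}"
    and "simple_graph (V - {r}) {e \<in> G. r \<notin> e}"
    and "root_children G r \<subseteq> V - R"
proof -
  have simple: "simple_graph V G"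
    using forest by (simp add: rooted_forest_def)
  show "G = attach r (root_children G r) {e \<in> G. r \<notin> e}"
  proof (intro equalityI subsetI)
    fix e assume "e \<in> G"
    moreover obtain a b where "e = {a, b}"
      using simple \<open>e \<in> G\<close> by (auto simp: simple_graph_def)
    ultimately show "e \<in> attach r (root_children G r) {e \<in> G. r \<notin> e}"
      by (cases "r \<in> e") (auto simp: attach_def root_children_def insert_commute)
  qed (auto simp: attach_def root_children_def)
  show "simple_graph (V - {r}) {e \<in> G. r \<notin> e}"
    using simple unfolding simple_graph_def by blast
  show "root_children G r \<subseteq> V - R"
  proof
    fix j assume "j \<in> root_children G r"
    then have "{r, j} \<in> G" by (simp add: root_children_def)
    then have "j \<in> V" "j \<noteq> r" and "conn G j r"
      using simple_graph_edge[OF simple] conn_sym[OF conn_adj] by (auto simp: adj_def)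
    moreover have "\<forall>\<rho>\<in>R. \<forall>\<rho>'\<in>R. conn G \<rho> \<rho>' \<longrightarrow> \<rho> = \<rho>'"
      using forest unfolding rooted_forest_def by blast
    ultimately show "j \<in> V - R" using r by blast
  qed
qed

lemma bij_betw_attach_rooted_forests:
  assumes "r \<in> R" "R \<subseteq> V"
  shows "bij_betw (\<lambda>(J, E). attach r J E)
           (SIGMA J:{J. J \<subseteq> V - R \<and> P J}. {E. rooted_forest (V - {r}) E (R - {r} \<union> J)})
           {G. rooted_forest V G R \<and> P (root_children G r)}"
proof -
  define S where "S = (SIGMA J:{J. J \<subseteq> V - R \<and> P J}. {E. rooted_forest (V - {r}) E (R - {r} \<union> J)})"
  have in_S: "J \<subseteq> V - R" "simple_graph (V - {r}) E" if "(J, E) \<in> S" for J E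
    using that unfolding S_def rooted_forest_def by blast+
  have avoid: "r \<notin> J" "\<forall>e\<in>E. r \<notin> e" if "(J, E) \<in> S" for J E
    using in_S(1)[OF that] simple_graph_avoids[OF in_S(2)[OF that]] \<open>r \<in> R\<close> by blast+
  have "inj_on (\<lambda>(J, E). attach r J E) S"
  proof (rule inj_onI, clarify)
    fix J E J' E' assume "(J, E) \<in> S" "(J', E') \<in> S" "attach r J E = attach r J' E'"
    then show "J = J' \<and> E = E'"
      using inj_onD[OF inj_on_attach[of r], of "(J, E)" "(J', E')"] avoid[of J E] avoid[of J' E']
      by simp
  qed
  moreover have "(\<lambda>(J, E). attach r J E) ` S = {G. rooted_forest V G R \<and> P (root_children G r)}"
  proof (intro equalityI subsetI)
    fix G assume "G \<in> (\<lambda>(J, E). attach r J E) ` S"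
    then obtain J E where JE: "(J, E) \<in> S" "G = attach r J E" by auto
    then have "root_children G r = J"
      using root_children_attach[OF avoid(2,1)[OF JE(1)]] by simp
    with JE show "G \<in> {G. rooted_forest V G R \<and> P (root_children G r)}"
      using rooted_forest_attach_iff[OF assms in_S[OF JE(1)]] by (simp add: S_def)
  next
    fix G assume "G \<in> {G. rooted_forest V G R \<and> P (root_children G r)}"
    then have G: "rooted_forest V G R" "P (root_children G r)" by simp_all
    note parts = rooted_forest_decompose[OF G(1) \<open>r \<in> R\<close>]
    have "rooted_forest (V - {r}) {e \<in> G. r \<notin> e} (R - {r} \<union> root_children G r)"
      using rooted_forest_attach_iff[OF assms parts(3,2)] parts(1) G(1) by simp
    with G(2) parts(3) have "(root_children G r, {e \<in> G. r \<notin> e}) \<in> S"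
      by (simp add: S_def)
    then have "attach r (root_children G r) {e \<in> G. r \<notin> e} \<in> (\<lambda>(J, E). attach r J E) ` S"
      by (rule rev_image_eqI) simp
    with parts(1) show "G \<in> (\<lambda>(J, E). attach r J E) ` S" by simp
  qed
  ultimately show ?thesis
    unfolding S_def by (rule bij_betw_imageI)
qed

lemma card_rooted_forests_by_root_children:
  assumes "finite V" "r \<in> R" "R \<subseteq> V"
  shows "card {G. rooted_forest V G R \<and> P (root_children G r)} =
         (\<Sum>J | J \<subseteq> V - R \<and> P J. card {E. rooted_forest (V - {r}) E (R - {r} \<union> J)})"
  using bij_betw_same_card[OF bij_betw_attach_rooted_forests[OF assms(2,3)]] \<open>finite V\<close>
  by (simp add: card_SigmaI finite_rooted_forests)

section \<open>Binomial sums\<close>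

lemma choose_power_sum:
  fixes x :: "'a::comm_semiring_1"
  shows "(\<Sum>j\<le>m. of_nat (m choose j) * x ^ (m - j)) = (x + 1) ^ m"
  using binomial_ring[of 1 x m] by (simp add: add.commute)

lemma index_choose_power_sum:
  fixes x :: "'a::comm_semiring_1"
  shows "(x + 1) * (\<Sum>j\<le>m. of_nat j * of_nat (m choose j) * x ^ (m - j)) = of_nat m * (x + 1) ^ m"
proof (cases m)
  case (Suc m')
  have "(\<Sum>j\<le>m. of_nat j * of_nat (m choose j) * x ^ (m - j))
      = (\<Sum>j\<le>m'. of_nat (Suc j * (Suc m' choose Suc j)) * x ^ (m' - j))"
    unfolding Suc sum.atMost_Suc_shift
    by (simp only: of_nat_0 mult_zero_left add_0 diff_Suc_Suc of_nat_mult)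
  also have "\<dots> = of_nat m * (\<Sum>j\<le>m'. of_nat (m' choose j) * x ^ (m' - j))"
    unfolding Suc_times_binomial by (simp only: Suc of_nat_mult sum_distrib_left mult.assoc)
  finally show ?thesis
    by (simp add: choose_power_sum Suc algebra_simps)
qed simp

lemma affine_choose_power_sum:
  fixes x a :: "'a::comm_semiring_1"
  shows "(x + 1) * (\<Sum>j\<le>m. of_nat (m choose j) * (a + of_nat j) * x ^ (m - j))
       = (x + 1) ^ m * (a * (x + 1) + of_nat m)"
proof -
  have "(\<Sum>j\<le>m. of_nat (m choose j) * (a + of_nat j) * x ^ (m - j))
      = a * (\<Sum>j\<le>m. of_nat (m choose j) * x ^ (m - j))
        + (\<Sum>j\<le>m. of_nat j * of_nat (m choose j) * x ^ (m - j))"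
    by (simp add: sum_distrib_left sum.distrib algebra_simps)
  then show ?thesis
    using choose_power_sum[of m x] index_choose_power_sum[of x m] by (simp add: algebra_simps)
qed

lemma sum_subsets_card:
  fixes h :: "nat \<Rightarrow> 'a::comm_semiring_1"
  assumes "finite A"
  shows "(\<Sum>J | J \<subseteq> A. h (card J)) = (\<Sum>j\<le>card A. of_nat (card A choose j) * h j)"
proof -
  have "(\<Sum>J | J \<subseteq> A. h (card J)) = (\<Sum>j\<le>card A. \<Sum>J | J \<subseteq> A \<and> card J = j. h (card J))"
    using assms by (subst sum.group[symmetric, of _ _ card]) (auto intro: card_mono)
  also have "\<dots> = (\<Sum>j\<le>card A. of_nat (card A choose j) * h j)"
    using n_subsets[OF assms] by (intro sum.cong) auto
  finally show ?thesis .
qed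

lemma bij_betw_Un_subsets:
  assumes "A \<inter> B = {}"
  shows "bij_betw (\<lambda>(X, Y). X \<union> Y) ({X. X \<subseteq> A \<and> card X = k} \<times> {Y. Y \<subseteq> B})
           {J. J \<subseteq> A \<union> B \<and> card (J \<inter> A) = k}"
proof -
  have "(X \<union> Y) \<inter> A = X" "(X \<union> Y) \<inter> B = Y" if "X \<subseteq> A" "Y \<subseteq> B" for X Y
    using that assms by blast+
  then show ?thesis
    by (intro bij_betw_byWitness[where f' = "\<lambda>J. (J \<inter> A, J \<inter> B)"]) auto
qed

lemma sum_subsets_Un_card:
  fixes h :: "nat \<Rightarrow> 'a::comm_semiring_1"
  assumes "finite A" "finite B" "A \<inter> B = {}"
  shows "(\<Sum>J | J \<subseteq> A \<union> B \<and> card (J \<inter> A) = k. h (card J))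
       = of_nat (card A choose k) * (\<Sum>j\<le>card B. of_nat (card B choose j) * h (k + j))"
proof -
  have card_Un: "card (X \<union> Y) = k + card Y" if "X \<subseteq> A" "card X = k" "Y \<subseteq> B" for X Y
  proof -
    have "finite X" "finite Y" "X \<inter> Y = {}"
      using that assms finite_subset by blast+
    with that(2) show ?thesis by (simp add: card_Un_disjoint)
  qed
  have "(\<Sum>J | J \<subseteq> A \<union> B \<and> card (J \<inter> A) = k. h (card J))
      = (\<Sum>(X, Y) \<in> {X. X \<subseteq> A \<and> card X = k} \<times> {Y. Y \<subseteq> B}. h (card (X \<union> Y)))"
    using sum.reindex_bij_betw[OF bij_betw_Un_subsets[OF assms(3)], of "\<lambda>J. h (card J)"]
    by (simp add: case_prod_unfold)
  also have "\<dots> = (\<Sum>X | X \<subseteq> A \<and> card X = k. \<Sum>Y | Y \<subseteq> B. h (k + card Y))"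
    unfolding sum.cartesian_product[symmetric] using card_Un by (intro sum.cong) auto
  also have "\<dots> = of_nat (card A choose k) * (\<Sum>j\<le>card B. of_nat (card B choose j) * h (k + j))"
    using n_subsets[OF assms(1)] sum_subsets_card[OF assms(2), of "\<lambda>j. h (k + j)"] by simp
  finally show ?thesis .
qed

section \<open>Counting rooted forests\<close>

(* Cayley's count s N^(N-s-1) of forests on N labelled vertices rooted at a prescribed s-set;
   the case N = 0, where the formula would give 0, is the single empty forest. *)
definition forest_number :: "nat \<Rightarrow> nat \<Rightarrow> rat" where
  "forest_number N s = (if N = 0 then 1 else of_nat s * of_nat N powi (int N - int s - 1))"

lemma sum_choose_forest_number:
  assumes "1 \<le> n"
  shows "(\<Sum>j\<le>m. of_nat (m choose j) * forest_number n (a + j))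
       = (of_nat a * (of_nat n + 1) + of_nat m)
         * of_nat n powi (int n - int a - int m - 1) * (of_nat n + 1) powi (int m - 1)"
proof -
  define x :: rat where "x = of_nat n"
  define e where "e = int n - int a - int m - 1"
  define S where "S = (\<Sum>j\<le>m. of_nat (m choose j) * (of_nat a + of_nat j) * x ^ (m - j))"
  have "x \<noteq> 0" "x + 1 \<noteq> 0" using assms by (simp_all add: x_def add_eq_0_iff)
  have "forest_number n (a + j) = x powi e * ((of_nat a + of_nat j) * x ^ (m - j))"
    if "j \<le> m" for j
  proof -
    have "x powi (int n - int (a + j) - 1) = x powi (e + int (m - j))"
      using that unfolding e_def by (intro arg_cong[where f = "power_int x"]) simp
    also have "\<dots> = x powi e * x ^ (m - j)"
      by (simp only: power_int_add[OF disjI1[OF \<open>x \<noteq> 0\<close>]] power_int_of_nat)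
    finally show ?thesis
      using assms by (simp add: forest_number_def x_def)
  qed
  then have "(\<Sum>j\<le>m. of_nat (m choose j) * forest_number n (a + j))
      = (\<Sum>j\<le>m. x powi e * (of_nat (m choose j) * (of_nat a + of_nat j) * x ^ (m - j)))"
    by (intro sum.cong) (simp_all add: mult_ac)
  also have "\<dots> = x powi e * S"
    by (simp add: S_def sum_distrib_left)
  also have "S = (of_nat a * (x + 1) + of_nat m) * (x + 1) powi (int m - 1)"
  proof -
    have "(x + 1) * S = (x + 1) * ((of_nat a * (x + 1) + of_nat m) * (x + 1) powi (int m - 1))"
      using affine_choose_power_sum[of x m "of_nat a"] \<open>x + 1 \<noteq> 0\<close>
      by (simp add: S_def power_int_diff)
    with \<open>x + 1 \<noteq> 0\<close> show ?thesis by simp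
  qed
  finally show ?thesis
    by (simp add: x_def e_def mult_ac)
qed

lemma forest_number_recurrence:
  assumes "1 \<le> s" "s \<le> N"
  shows "(\<Sum>j\<le>N - s. of_nat (N - s choose j) * forest_number (N - 1) (s - 1 + j))
       = forest_number N s"
proof (cases "N = 1")
  case False
  with assms have "1 \<le> N - 1" by linarith
  have "int (N - 1) - int (s - 1) - int (N - s) - 1 = -1" "int (N - s) - 1 = int N - int s - 1"
    using assms by simp_all
  moreover have "of_nat (s - 1) * (of_nat (N - 1) + 1) + of_nat (N - s)
      = (of_nat s * of_nat (N - 1) :: rat)"
    using assms by (simp add: algebra_simps)
  moreover have "of_nat (N - 1) \<noteq> (0 :: rat)" "of_nat (N - 1) + 1 = (of_nat N :: rat)"
    using \<open>1 \<le> N - 1\<close> by simp_all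
  ultimately show ?thesis
    using sum_choose_forest_number[OF \<open>1 \<le> N - 1\<close>, of "N - s" "s - 1"] assms
    by (simp add: forest_number_def power_int_minus)
qed (use assms in \<open>simp add: forest_number_def\<close>)

lemma rooted_forests_without_roots: "{E. rooted_forest V E {}} = (if V = {} then {{}} else {})"
proof -
  have "\<not> has_cycle {}"
    by (simp add: has_cycle_iff_is_cycle is_cycle_def adj_def)
  moreover have "E = {}" if "simple_graph {} E" for E :: "'a set set"
    using that by (simp add: simple_graph_def)
  ultimately show ?thesis
    by (auto simp: rooted_forest_def simple_graph_def)
qed

lemma card_remove_Un_disjoint:
  "finite R \<Longrightarrow> finite J \<Longrightarrow> r \<in> R \<Longrightarrow> R \<inter> J = {} \<Longrightarrow> card (R - {r} \<union> J) = card R - 1 + card J"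
  by (subst card_Un_disjoint) (auto simp: card_Diff_singleton)

lemma card_rooted_forests:
  assumes "finite V" "R \<subseteq> V"
  shows "of_nat (card {E. rooted_forest V E R}) = forest_number (card V) (card R)"
  using assms
proof (induction "card V" arbitrary: V R rule: less_induct)
  case less
  show ?case
  proof (cases "R = {}")
    case True
    with less.prems show ?thesis
      by (simp add: rooted_forests_without_roots forest_number_def)
  next
    case False
    then obtain r where "r \<in> R" by blast
    have "finite R" using less.prems finite_subset by blast
    then have s: "1 \<le> card R" "card R \<le> card V" "card (V - R) = card V - card R"
      using \<open>r \<in> R\<close> less.prems by (auto simp: Suc_le_eq card_gt_0_iff card_mono card_Diff_subset)
    have "r \<in> V" using \<open>r \<in> R\<close> less.prems by blast
    then have "card (V - {r}) < card V" "card (V - {r}) = card V - 1"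
      using card_Diff1_less[OF less.prems(1)] card_Diff_singleton[OF \<open>r \<in> V\<close>] by simp_all
    have children: "of_nat (card {E. rooted_forest (V - {r}) E (R - {r} \<union> J)})
        = forest_number (card V - 1) (card R - 1 + card J)" if "J \<subseteq> V - R" for J
    proof -
      have "finite J" using that less.prems(1) by (meson finite_Diff finite_subset)
      then have "card (R - {r} \<union> J) = card R - 1 + card J"
        using that \<open>r \<in> R\<close> \<open>finite R\<close> by (intro card_remove_Un_disjoint) auto
      moreover have "R - {r} \<union> J \<subseteq> V - {r}" using that less.prems \<open>r \<in> R\<close> by blast
      ultimately show ?thesis
        using less.hyps[OF \<open>card (V - {r}) < card V\<close>] less.prems \<open>card (V - {r}) = card V - 1\<close>
        by simp
    qed
    have "of_nat (card {E. rooted_forest V E R})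
        = (\<Sum>J | J \<subseteq> V - R. of_nat (card {E. rooted_forest (V - {r}) E (R - {r} \<union> J)}))"
      using card_rooted_forests_by_root_children[OF less.prems(1) \<open>r \<in> R\<close> less.prems(2),
          where P = "\<lambda>_. True"]
      by simp
    also have "\<dots> = (\<Sum>J | J \<subseteq> V - R. forest_number (card V - 1) (card R - 1 + card J))"
      using children by (intro sum.cong) simp_all
    also have "\<dots> = (\<Sum>j\<le>card V - card R.
        of_nat (card V - card R choose j) * forest_number (card V - 1) (card R - 1 + j))"
      using sum_subsets_card[of "V - R"] less.prems s(3) by simp
    also have "\<dots> = forest_number (card V) (card R)"
      using forest_number_recurrence s(1,2) by blast
    finally show ?thesis .
  qed
qed

lemma card_trees_by_root_children:
  assumes "finite V" "i \<in> V"
  shows "of_nat (card {E. is_tree V E \<and> P (root_children E i)})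
       = (\<Sum>J | J \<subseteq> V - {i} \<and> P J. forest_number (card V - 1) (card J))"
proof -
  have "(of_nat (card {E. is_tree V E \<and> P (root_children E i)}) :: rat)
      = of_nat (\<Sum>J | J \<subseteq> V - {i} \<and> P J. card {E. rooted_forest (V - {i}) E J})"
    using card_rooted_forests_by_root_children[OF assms(1), of i "{i}" P] assms
    by (simp add: tree_iff_rooted_forest[OF assms(2)])
  also have "\<dots> = (\<Sum>J | J \<subseteq> V - {i} \<and> P J. forest_number (card V - 1) (card J))"
    unfolding of_nat_sum using assms by (intro sum.cong refl) (simp add: card_rooted_forests)
  finally show ?thesis .
qed

lemma forest_number_sum_closed_form:
  fixes n i k :: nat
  assumes "1 \<le> n" "i \<le> n + 1"
  shows "(\<Sum>j\<le>n + 1 - i. of_nat (n + 1 - i choose j) * forest_number n (k + j))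
       = (of_nat ((k + 1) * (n + 1)) - of_nat i) * of_nat n powi (int i - int k - 2)
         * of_nat (n + 1) powi (int n - int i)"
proof -
  have "int n - int k - int (n + 1 - i) - 1 = int i - int k - 2"
    and "int (n + 1 - i) - 1 = int n - int i"
    using assms(2) by simp_all
  moreover have "of_nat k * of_nat (n + 1) + of_nat (n + 1 - i)
      = (of_nat ((k + 1) * (n + 1)) - of_nat i :: rat)"
    using assms(2) by (simp add: algebra_simps)
  moreover have "(of_nat n + 1 :: rat) = of_nat (n + 1)"
    by simp
  ultimately show ?thesis
    using sum_choose_forest_number[OF assms(1), of "n + 1 - i" k] by (simp only:)
qed

theorem mainTheorem4:
  fixes n i k :: nat
  assumes "n \<ge> 1" and "1 \<le> i" and "i \<le> n + 1"
  shows "(of_nat (card {E. is_tree {1..n+1} E \<and>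
                          card {v \<in> root_children E i. v < i} = k}) :: rat)
         = of_nat ((i - 1) choose k) * (of_nat ((k + 1) * (n + 1)) - of_nat i)
           * (of_nat n) powi (int i - int k - 2) * (of_nat (n + 1)) powi (int n - int i)"
proof -
  define Lo where "Lo = {1..<i}"
  define Up where "Up = {i+1..n+1}"
  have parts: "finite Lo" "finite Up" "Lo \<inter> Up = {}" "card Lo = i - 1" "card Up = n + 1 - i"
    by (auto simp: Lo_def Up_def)
  have children: "{J. J \<subseteq> {1..n+1} - {i} \<and> card {v \<in> J. v < i} = k}
      = {J. J \<subseteq> Lo \<union> Up \<and> card (J \<inter> Lo) = k}"
  proof (rule Collect_cong)
    fix J
    have "{1..n+1} - {i} = Lo \<union> Up" "J \<subseteq> Lo \<union> Up \<Longrightarrow> {v \<in> J. v < i} = J \<inter> Lo"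
      using assms by (auto simp: Lo_def Up_def)
    then show "J \<subseteq> {1..n+1} - {i} \<and> card {v \<in> J. v < i} = k \<longleftrightarrow> J \<subseteq> Lo \<union> Up \<and> card (J \<inter> Lo) = k"
      by auto
  qed
  have "(of_nat (card {E. is_tree {1..n+1} E \<and> card {v \<in> root_children E i. v < i} = k}) :: rat)
      = (\<Sum>J | J \<subseteq> Lo \<union> Up \<and> card (J \<inter> Lo) = k. forest_number n (card J))"
    using card_trees_by_root_children[of "{1..n+1}" i "\<lambda>J. card {v \<in> J. v < i} = k"] assms
    by (simp only: children) simp
  also have "\<dots> = of_nat ((i - 1) choose k)
      * (\<Sum>j\<le>n + 1 - i. of_nat (n + 1 - i choose j) * forest_number n (k + j))"
    using sum_subsets_Un_card[OF parts(1-3), where h = "forest_number n" and k = k]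
    by (simp only: parts(4,5))
  also have "\<dots> = of_nat ((i - 1) choose k) * (of_nat ((k + 1) * (n + 1)) - of_nat i)
      * (of_nat n) powi (int i - int k - 2) * (of_nat (n + 1)) powi (int n - int i)"
    using forest_number_sum_closed_form[OF assms(1,3)] by (simp add: mult.assoc)
  finally show ?thesis .
qed

end
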